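(* Let $T$ be a tournament, let $P=x_0x_1\ldots x_r$ be a path of length $r$ in $T$, and let $z\in V(T)\setminus V(P)$ be a vertex such that every vertex of $\{x_{\alpha+1},x_{\alpha+2},\ldots,x_r\}$ dominates $z$ and $z$ dominates every vertex of $\{x_0,x_1,\ldots,x_\alpha\}$, where $\alpha\in[2,r-3]$. Assume that $T$ contains no $(x_0,x_r)$-path of length $r+1$ whose vertex set is $\{z\}\cup V(P)$. Suppose that $x_sx_t$ is an arc of $T$ with $s\in[\alpha,r-2]$ and $t\in[s+2,r]$, and let $k=\lfloor \frac{1}{2}(t-s)\rfloor$. Then no vertex of $\{x_0,x_1,\ldots,x_{\alpha-1}\}$ dominates a vertex of $\{x_{s+1},x_{s+2},\ldots,x_{s+k}\}$.
   Context: Paths are directed and simple; the length of a path is its number of arcs. A vertex $u$ dominates $v$ if $uv$ is an arc. $[a,b]$ denotes the integers from $a$ to $b$. *)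

theory Defs
  imports Main
begin

definition tournament :: "'a set \<Rightarrow> ('a \<Rightarrow> 'a \<Rightarrow> bool) \<Rightarrow> bool" where
  "tournament V A \<longleftrightarrow> finite V
     \<and> (\<forall>u v. A u v \<longrightarrow> u \<in> V \<and> v \<in> V)
     \<and> (\<forall>u. \<not> A u u)
     \<and> (\<forall>u\<in>V. \<forall>v\<in>V. u \<noteq> v \<longrightarrow> (A u v \<longleftrightarrow> \<not> A v u))"

text \<open>A directed simple path given by its vertex sequence; its length is
  (length of the list) - 1 arcs.\<close>
definition is_path :: "'a set \<Rightarrow> ('a \<Rightarrow> 'a \<Rightarrow> bool) \<Rightarrow> 'a list \<Rightarrow> bool" where
  "is_path V A ps \<longleftrightarrow> ps \<noteq> [] \<and> distinct ps \<and> set ps \<subseteq> V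
     \<and> (\<forall>i. Suc i < length ps \<longrightarrow> A (ps ! i) (ps ! Suc i))"

end

theory Submission
  imports Defs
begin

text \<open>If some x_i with i < \<alpha> dominated some x_j with s < j \<le> s + floor((t - s)/2), then
  x_0 ... x_i x_j ... x_{t-1} x_{s+1} ... x_{j-1} z x_{i+1} ... x_s x_t ... x_r
  would be a forbidden (x_0, x_r)-path through z, as soon as j = s + 1 or x_{t-1} dominates
  x_{s+1}. Otherwise x_{s+1} dominates x_{t-1}: an arc of the same kind with t - s smaller
  by 2 whose range still contains j, so induction on t - s rules this case out too.\<close>

lemma is_path_iff_successively:
  "is_path V A ps \<longleftrightarrow> ps \<noteq> [] \<and> distinct ps \<and> set ps \<subseteq> V \<and> successively A ps"
  by (simp add: is_path_def successively_conv_nth)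

lemma tournament_arc_if_not_reverse:
  "tournament V A \<Longrightarrow> u \<in> V \<Longrightarrow> v \<in> V \<Longrightarrow> u \<noteq> v \<Longrightarrow> \<not> A v u \<Longrightarrow> A u v"
  unfolding tournament_def by blast

lemma take_eq_take_append_drop_take:
  "m \<le> n \<Longrightarrow> take n xs = take m xs @ drop m (take n xs)"
  using append_take_drop_id[of m "take n xs"] by (simp add: min_absorb1)

lemma hd_drop_take: "m < n \<Longrightarrow> n \<le> length xs \<Longrightarrow> hd (drop m (take n xs)) = xs ! m"
  by (simp add: hd_drop_conv_nth)

lemma last_drop_take: "m < n \<Longrightarrow> n \<le> length xs \<Longrightarrow> last (drop m (take n xs)) = xs ! (n - 1)"
  by (simp add: last_conv_nth)

lemma is_path_reroute:
  assumes path: "is_path V A (a @ c @ q @ b @ d)"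
    and z: "z \<in> V" "z \<notin> set (a @ c @ q @ b @ d)"
    and nonempty: "a \<noteq> []" "b \<noteq> []" "c \<noteq> []" "d \<noteq> []"
    and arcs: "A (last a) (hd b)" "q \<noteq> [] \<Longrightarrow> A (last b) (hd q)" "A (last (b @ q)) z"
      "A z (hd c)" "A (last c) (hd d)"
  shows "is_path V A (a @ b @ q @ [z] @ c @ d)"
proof -
  have "distinct (a @ c @ q @ b @ d)" "set (a @ c @ q @ b @ d) \<subseteq> V"
    and succ: "successively A (a @ c @ q @ b @ d)"
    using path by (auto simp: is_path_iff_successively)
  then have "distinct (a @ b @ q @ [z] @ c @ d)" "set (a @ b @ q @ [z] @ c @ d) \<subseteq> V"
    using z by auto
  moreover have "successively A (a @ b @ q @ [z] @ c @ d)"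
    using succ nonempty arcs by (cases "q = []") (auto simp: successively_append_iff successively_Cons)
  ultimately show ?thesis
    by (simp add: is_path_iff_successively)
qed

context
  fixes V :: "'a set" and A :: "'a \<Rightarrow> 'a \<Rightarrow> bool" and xs :: "'a list"
    and r \<alpha> :: nat and z :: 'a
  assumes path: "is_path V A xs" and len: "length xs = r + 1"
    and z: "z \<in> V" "z \<notin> set xs"
    and into_z: "\<forall>i. \<alpha> < i \<and> i \<le> r \<longrightarrow> A (xs ! i) z"
    and from_z: "\<forall>i. i \<le> \<alpha> \<longrightarrow> A z (xs ! i)"
begin

lemma path_through_z_if_crossing_arcs:
  assumes idx: "i < \<alpha>" "\<alpha> \<le> s" "s < j" "j < t" "t \<le> r"
    and arc_ij: "A (xs ! i) (xs ! j)" and arc_st: "A (xs ! s) (xs ! t)"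
    and back_arc: "j = s + 1 \<or> A (xs ! (t - 1)) (xs ! (s + 1))"
  shows "\<exists>ys. is_path V A ys \<and> length ys = r + 2 \<and> hd ys = xs ! 0 \<and> last ys = xs ! r
               \<and> set ys = insert z (set xs)"
proof -
  define a where "a = take (i + 1) xs"
  define c where "c = drop (i + 1) (take (s + 1) xs)"
  define q where "q = drop (s + 1) (take j xs)"
  define b where "b = drop j (take t xs)"
  define d where "d = drop t xs"
  have xs_split: "xs = a @ c @ q @ b @ d"
  proof -
    have "take (s + 1) xs = a @ c" "take j xs = take (s + 1) xs @ q" "take t xs = take j xs @ b"
      unfolding a_def c_def q_def b_def using idx
      by (auto intro: take_eq_take_append_drop_take)
    then show ?thesis
      unfolding d_def by (metis append_assoc append_take_drop_id)
  qed
  have a: "a \<noteq> []" "hd a = xs ! 0" "last a = xs ! i"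
    unfolding a_def using idx len hd_drop_take[of 0 "i + 1" xs] last_drop_take[of 0 "i + 1" xs]
    by auto
  have b: "b \<noteq> []" "hd b = xs ! j" "last b = xs ! (t - 1)"
    unfolding b_def using idx len hd_drop_take[of j t xs] last_drop_take[of j t xs] by auto
  have c: "c \<noteq> []" "hd c = xs ! (i + 1)" "last c = xs ! s"
    unfolding c_def using idx len hd_drop_take[of "i + 1" "s + 1" xs] last_drop_take[of "i + 1" "s + 1" xs]
    by auto
  have d: "d \<noteq> []" "hd d = xs ! t" "last d = xs ! r"
    unfolding d_def using idx len by (auto simp: hd_drop_conv_nth last_drop last_conv_nth)
  have "A (last b) (hd q)" if "q \<noteq> []"
  proof -
    have "j \<noteq> s + 1" using that unfolding q_def by auto
    then show ?thesis
      using that back_arc b idx len hd_drop_take[of "s + 1" j xs] unfolding q_def by auto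
  qed
  moreover have "A (last (b @ q)) z"
  proof (cases "q = []")
    case True
    have "\<alpha> < t - 1" "t - 1 \<le> r" using idx by linarith+
    then show ?thesis using True b into_z by auto
  next
    case False
    then have "last q = xs ! (j - 1)" "s < j - 1"
      unfolding q_def using idx len last_drop_take[of "s + 1" j xs] by auto
    then show ?thesis using False idx into_z by auto
  qed
  moreover have "A z (hd c)" using c idx from_z by auto
  ultimately have "is_path V A (a @ b @ q @ [z] @ c @ d)"
    using is_path_reroute[of V A a c q b d z] path z xs_split a b c d arc_ij arc_st by auto
  moreover have "set (a @ b @ q @ [z] @ c @ d) = insert z (set xs)"
    by (auto simp: xs_split)
  moreover have "length (a @ b @ q @ [z] @ c @ d) = r + 2"
    using len by (simp add: xs_split)
  ultimately show ?thesis
    using a(1,2) d(1,3) by (intro exI[of _ "a @ b @ q @ [z] @ c @ d"]) auto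
qed

lemma no_arc_from_start_into_first_half:
  assumes T: "tournament V A"
    and no_path: "\<not> (\<exists>ys. is_path V A ys \<and> length ys = r + 2 \<and> hd ys = xs ! 0 \<and> last ys = xs ! r
                        \<and> set ys = insert z (set xs))"
    and arc_st: "A (xs ! s) (xs ! t)" and st: "\<alpha> \<le> s" "s + 2 \<le> t" "t \<le> r"
    and ij: "i < \<alpha>" "s < j" "j \<le> s + (t - s) div 2"
  shows "\<not> A (xs ! i) (xs ! j)"
  using arc_st st ij
proof (induction "t - s" arbitrary: s t rule: less_induct)
  case less
  show ?case
  proof
    assume arc_ij: "A (xs ! i) (xs ! j)"
    have "j < t" using less.prems by linarith
    show False
    proof (cases "j = s + 1 \<or> A (xs ! (t - 1)) (xs ! (s + 1))")
      case True
      then show False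
        using path_through_z_if_crossing_arcs[of i s j t] less.prems \<open>j < t\<close> arc_ij no_path
        by blast
    next
      case False
      then have "s + 2 \<le> j" "\<not> A (xs ! (t - 1)) (xs ! (s + 1))"
        using less.prems by auto
      then have "s + 4 \<le> t" using less.prems by linarith
      have "xs ! (s + 1) \<noteq> xs ! (t - 1)"
        using path \<open>s + 4 \<le> t\<close> less.prems len by (auto simp: is_path_def nth_eq_iff_index_eq)
      moreover have "xs ! (s + 1) \<in> V" "xs ! (t - 1) \<in> V"
        using path \<open>s + 4 \<le> t\<close> less.prems len by (auto simp: is_path_def)
      ultimately have "A (xs ! (s + 1)) (xs ! (t - 1))"
        using tournament_arc_if_not_reverse[OF T] \<open>\<not> A (xs ! (t - 1)) (xs ! (s + 1))\<close> by blast
      moreover have "j \<le> (s + 1) + ((t - 1) - (s + 1)) div 2"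
        using less.prems \<open>s + 4 \<le> t\<close> by linarith
      ultimately show False
        using less.hyps[of "t - 1" "s + 1"] less.prems \<open>s + 2 \<le> j\<close> \<open>s + 4 \<le> t\<close> arc_ij
        by fastforce
    qed
  qed
qed

end

theorem lemma3p4:
  fixes V :: "'a set" and A :: "'a \<Rightarrow> 'a \<Rightarrow> bool" and xs :: "'a list"
    and r \<alpha> s t :: nat and z :: 'a
  assumes T: "tournament V A"
    and P: "is_path V A xs" and len: "length xs = r + 1"
    and zV: "z \<in> V" and znot: "z \<notin> set xs"
    and dom1: "\<forall>i. \<alpha> < i \<and> i \<le> r \<longrightarrow> A (xs ! i) z"
    and dom2: "\<forall>i. i \<le> \<alpha> \<longrightarrow> A z (xs ! i)"
    and alpha: "2 \<le> \<alpha>" "\<alpha> + 3 \<le> r"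
    and nopath: "\<not> (\<exists>ys. is_path V A ys \<and> length ys = r + 2
                     \<and> hd ys = xs ! 0 \<and> last ys = xs ! r
                     \<and> set ys = insert z (set xs))"
    and arc: "A (xs ! s) (xs ! t)"
    and s: "\<alpha> \<le> s" "s + 2 \<le> r"
    and t: "s + 2 \<le> t" "t \<le> r"
  shows "\<forall>i j. i < \<alpha> \<and> s + 1 \<le> j \<and> j \<le> s + (t - s) div 2
                 \<longrightarrow> \<not> A (xs ! i) (xs ! j)"
  using no_arc_from_start_into_first_half[OF P len zV znot dom1 dom2 T nopath arc s(1) t]
  by simp

end
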